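(* Let $n$ be a positive integer, and let $a\in\mathcal{T}_n$ with $\operatorname{rank}(a)=r$. Then the variant $\mathcal{T}_n^a$ embeds in $\mathcal{T}_{2n-r}$ (i.e., there is an injective semigroup homomorphism $\mathcal{T}_n^a\to\mathcal{T}_{2n-r}$).
   Context: For a positive integer $m$, $\mathcal{T}_m$ is the semigroup of all functions $\{1,\ldots,m\}\to\{1,\ldots,m\}$ under composition; $\operatorname{rank}(f)=|\operatorname{im}(f)|$. For a semigroup $S$ and $a\in S$, the variant $S^a$ is the set $S$ with operation $x\star_a y=xay$. *)

theory Defs
  imports "HOL-Library.FuncSet"
begin

definition T :: "nat \<Rightarrow> (nat \<Rightarrow> nat) set" where
  "T m = ({1..m} \<rightarrow>\<^sub>E {1..m})"

text \<open>Product in T_m: composition (x*y means apply x first, then y; the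
  semigroup is anti-isomorphic under the other convention, and the statement
  is insensitive to the choice as long as it is used uniformly).\<close>
definition tmult :: "nat \<Rightarrow> (nat \<Rightarrow> nat) \<Rightarrow> (nat \<Rightarrow> nat) \<Rightarrow> (nat \<Rightarrow> nat)" where
  "tmult m x y = compose {1..m} y x"

definition trank :: "nat \<Rightarrow> (nat \<Rightarrow> nat) \<Rightarrow> nat" where
  "trank m f = card (f ` {1..m})"

definition vmult :: "nat \<Rightarrow> (nat \<Rightarrow> nat) \<Rightarrow> (nat \<Rightarrow> nat) \<Rightarrow> (nat \<Rightarrow> nat) \<Rightarrow> (nat \<Rightarrow> nat)" where
  "vmult m a x y = tmult m (tmult m x a) y"

end

theory Submission
  imports Defs
begin

text \<open>Let \<open>r\<close> be the rank of \<open>a\<close> and pick a map \<open>g\<close> from \<open>{1..2n-r}\<close> onto \<open>{1..n}\<close>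
  that agrees with \<open>a\<close> on \<open>{1..n}\<close>; it exists because exactly \<open>n - r\<close> points of
  \<open>{1..n}\<close> are missed by \<open>a\<close>. Precomposition \<open>x \<mapsto> x \<circ> g\<close> is injective since \<open>g\<close> is
  onto, and it turns the variant product into composition: as \<open>x \<circ> g\<close> takes values in
  \<open>{1..n}\<close>, where \<open>g\<close> acts as \<open>a\<close>, we get \<open>y \<circ> g \<circ> x \<circ> g = y \<circ> a \<circ> x \<circ> g\<close>.\<close>

definition pullback :: "nat \<Rightarrow> (nat \<Rightarrow> nat) \<Rightarrow> (nat \<Rightarrow> nat) \<Rightarrow> nat \<Rightarrow> nat" where
  "pullback N g x = restrict (x \<circ> g) {1..N}"

lemma T_memberD: "x \<in> T n \<Longrightarrow> i \<in> {1..n} \<Longrightarrow> x i \<in> {1..n}"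
  unfolding T_def by auto

lemma trank_le: "a \<in> T n \<Longrightarrow> trank n a \<le> n"
  unfolding trank_def T_def by (metis card_atLeastAtMost card_image_le diff_Suc_1 finite_atLeastAtMost)

lemma pullback_in_T:
  assumes "g \<in> {1..N} \<rightarrow> {1..n}" and "n \<le> N" and "x \<in> T n"
  shows "pullback N g x \<in> T N"
proof -
  have "x (g w) \<in> {1..N}" if "w \<in> {1..N}" for w
    using assms T_memberD[OF assms(3)] that by fastforce
  then show ?thesis unfolding pullback_def T_def by auto
qed

lemma inj_on_pullback:
  assumes "{1..n} \<subseteq> g ` {1..N}"
  shows "inj_on (pullback N g) (T n)"
proof (rule inj_onI)
  fix x y assume x: "x \<in> T n" and y: "y \<in> T n" and eq: "pullback N g x = pullback N g y"
  show "x = y"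
  proof (rule extensionalityI[of _ "{1..n}"])
    show "x \<in> extensional {1..n}" "y \<in> extensional {1..n}"
      using x y unfolding T_def by (auto simp: PiE_def)
  next
    fix j assume "j \<in> {1..n}"
    then obtain w where "w \<in> {1..N}" "g w = j" using assms by blast
    then show "x j = y j" using fun_cong[OF eq, of w] by (simp add: pullback_def)
  qed
qed

lemma pullback_vmult:
  assumes "g \<in> {1..N} \<rightarrow> {1..n}" and "n \<le> N" and "\<forall>i\<in>{1..n}. g i = a i" and "x \<in> T n"
  shows "pullback N g (vmult n a x y) = tmult N (pullback N g x) (pullback N g y)"
proof
  fix w
  show "pullback N g (vmult n a x y) w = tmult N (pullback N g x) (pullback N g y) w"
  proof (cases "w \<in> {1..N}")
    case True
    then have gw: "g w \<in> {1..n}" using assms(1) by blast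
    then have "x (g w) \<in> {1..n}" using T_memberD[OF assms(4)] by blast
    then show ?thesis using True gw assms(2,3)
      by (simp add: pullback_def vmult_def tmult_def compose_def)
  next
    case False
    then have "pullback N g (vmult n a x y) w = undefined"
      and "tmult N (pullback N g x) (pullback N g y) w = undefined"
      by (auto simp: pullback_def tmult_def compose_def)
    then show ?thesis by simp
  qed
qed

lemma extend_onto:
  assumes "a ` A \<subseteq> B" and "finite B" and "finite C" and "A \<inter> C = {}"
    and "card C = card (B - a ` A)"
  obtains g where "g ` (A \<union> C) = B" and "\<forall>i\<in>A. g i = a i"
proof -
  obtain e where e: "bij_betw e C (B - a ` A)"
    using finite_same_card_bij assms(2,3,5) by blast
  define g where "g i = (if i \<in> A then a i else e i)" for i
  have "g ` A = a ` A" by (simp add: g_def)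
  moreover have "g ` C = e ` C" using assms(4) by (auto simp: g_def)
  then have "g ` C = B - a ` A" using e by (simp add: bij_betw_def)
  ultimately have "g ` (A \<union> C) = B" using assms(1) by (auto simp: image_Un)
  moreover have "\<forall>i\<in>A. g i = a i" by (simp add: g_def)
  ultimately show thesis by (rule that)
qed

lemma exists_onto_extension:
  assumes "a \<in> T n"
  obtains g where "g ` {1..2 * n - trank n a} = {1..n}" and "\<forall>i\<in>{1..n}. g i = a i"
proof -
  let ?r = "trank n a"
  have r_le: "?r \<le> n" using trank_le[OF assms] .
  have a_into: "a ` {1..n} \<subseteq> {1..n}" using T_memberD[OF assms] by blast
  have "card ({1..n} - a ` {1..n}) = n - ?r"
    using a_into by (simp add: card_Diff_subset finite_subset trank_def)
  then obtain g where "g ` ({1..n} \<union> {n+1..2 * n - ?r}) = {1..n}" "\<forall>i\<in>{1..n}. g i = a i"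
    using extend_onto[OF a_into, of "{n+1..2 * n - ?r}"] r_le by auto
  moreover have "{1..n} \<union> {n+1..2 * n - ?r} = {1..2 * n - ?r}" using r_le by auto
  ultimately show thesis using that by simp
qed

theorem corollary4p1:
  fixes n r :: nat and a :: "nat \<Rightarrow> nat"
  assumes "n \<ge> 1" and "a \<in> T n" and "trank n a = r"
  shows "\<exists>\<phi>. \<phi> \<in> T n \<rightarrow> T (2 * n - r) \<and> inj_on \<phi> (T n) \<and>
           (\<forall>x\<in>T n. \<forall>y\<in>T n. \<phi> (vmult n a x y) = tmult (2 * n - r) (\<phi> x) (\<phi> y))"
proof -
  let ?N = "2 * n - r"
  obtain g where onto: "g ` {1..?N} = {1..n}" and agree: "\<forall>i\<in>{1..n}. g i = a i"
    using exists_onto_extension[OF assms(2)] assms(3) by blast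
  have g_into: "g \<in> {1..?N} \<rightarrow> {1..n}" using onto by blast
  have "n \<le> ?N" using trank_le[OF assms(2)] assms(3) by simp
  then show ?thesis
    using pullback_in_T[OF g_into] inj_on_pullback[of n g ?N] onto
      pullback_vmult[OF g_into _ agree]
    by (intro exI[of _ "pullback ?N g"]) (simp add: Pi_iff)
qed

end
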